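(* Consider binary floating-point arithmetic with precision $p\ge 4$ and unit round-off $u=2^{-p}$, operations correctly rounded to nearest ($\mathrm{RN}$), barring overflow and underflow. For floating-point inputs $x,y$ consider the algorithm: if $|x|<|y|$ swap $x$ and $y$; $(s_x^h,s_x^\ell)\gets\mathrm{Fast2Mult}(x,x)$; $(s_y^h,s_y^\ell)\gets\mathrm{Fast2Mult}(y,y)$; $(\sigma_h,\sigma_\ell)\gets\mathrm{Fast2Sum}(s_x^h,s_y^h)$; $s\gets\mathrm{RN}(\sqrt{\sigma_h})$; $\delta_s\gets\mathrm{RN}(\sigma_h-s^2)$; $\tau_1\gets\mathrm{RN}(s_x^\ell+s_y^\ell)$; $\tau_2\gets\mathrm{RN}(\delta_s+\sigma_\ell)$; $\tau\gets\mathrm{RN}(\tau_1+\tau_2)$; $c\gets\mathrm{RN}(\tau/s)$; $\rho_4\gets\mathrm{RN}(c/2+s)$. Then the relative error $|\rho_4/\sqrt{x^2+y^2}-1|$ is bounded by $u+(7+\kappa)u^2$, where $\kappa\le 21.4$ if $u\le 2^{-4}$; $\kappa\le 6.1$ if $u\le 2^{-5}$; $\kappa\le 2.5$ if $u\le2^{-6}$; $\kappa\le 1.2$ if $u\le 2^{-7}$; $\kappa\le 0.6$ if $u\le 2^{-8}$; $\kappa\le 7\cdot10^{-2}$ if $u\le 2^{-11}$; $\kappa\le 8\cdot 10^{-6}$ if $u\le 2^{-24}$; $\kappa\le 2\cdot10^{-14}$ if $u\le 2^{-53}$; $\kappa\le 2\cdot 10^{-32}$ if $u\le 2^{-113}$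.
   Context: A radix-2 floating-point number of precision $p$ has the form $M\cdot 2^{e-p+1}$ with integers $|M|\le 2^p-1$ and $e_{\min}\le e\le e_{\max}$. $\mathrm{RN}$ is rounding to nearest (ties-to-even). $\mathrm{Fast2Mult}(a,b)$ returns the pair of floating-point numbers $(h,\ell)$ with $h=\mathrm{RN}(ab)$ and $\ell = ab-h$ exactly; $\mathrm{Fast2Sum}(a,b)$ returns $(h,\ell)$ with $h=\mathrm{RN}(a+b)$ and $\ell=(a+b)-h$ exactly. The computation $\delta_s = \mathrm{RN}(\sigma_h-s^2)$ is done with a single rounding (FMA). *)

theory Defs
  imports Complex_Main
begin

text \<open>Binary floating-point numbers of precision p with unbounded exponent range
  (this models "barring overflow and underflow"): x = M * 2^e with integers M, e and |M| < 2^p.\<close>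

definition is_float :: "nat \<Rightarrow> real \<Rightarrow> bool" where
  "is_float p x \<longleftrightarrow> (\<exists>M e :: int. x = real_of_int M * 2 powr real_of_int e \<and> \<bar>M\<bar> < 2 ^ p)"

definition even_float :: "nat \<Rightarrow> real \<Rightarrow> bool" where
  "even_float p x \<longleftrightarrow> x = 0 \<or>
     (\<exists>M e :: int. x = real_of_int M * 2 powr real_of_int e \<and>
        2 ^ (p - 1) \<le> \<bar>M\<bar> \<and> \<bar>M\<bar> < 2 ^ p \<and> even M)"

definition RN :: "nat \<Rightarrow> real \<Rightarrow> real" where
  "RN p x = (THE f. is_float p f \<and> (\<forall>g. is_float p g \<longrightarrow> \<bar>x - f\<bar> \<le> \<bar>x - g\<bar>) \<and>
       ((\<forall>g. is_float p g \<and> \<bar>x - g\<bar> = \<bar>x - f\<bar> \<longrightarrow> g = f) \<or> even_float p f))"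

definition Fast2Mult :: "nat \<Rightarrow> real \<Rightarrow> real \<Rightarrow> real \<times> real" where
  "Fast2Mult p a b = (RN p (a * b), a * b - RN p (a * b))"

definition Fast2Sum :: "nat \<Rightarrow> real \<Rightarrow> real \<Rightarrow> real \<times> real" where
  "Fast2Sum p a b = (RN p (a + b), (a + b) - RN p (a + b))"

definition hypot4 :: "nat \<Rightarrow> real \<Rightarrow> real \<Rightarrow> real" where
  "hypot4 p x0 y0 =
    (let (x, y) = (if \<bar>x0\<bar> < \<bar>y0\<bar> then (y0, x0) else (x0, y0));
         (sxh, sxl) = Fast2Mult p x x;
         (syh, syl) = Fast2Mult p y y;
         (\<sigma>h, \<sigma>l) = Fast2Sum p sxh syh;
         s = RN p (sqrt \<sigma>h);
         \<delta>s = RN p (\<sigma>h - s^2);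
         \<tau>1 = RN p (sxl + syl);
         \<tau>2 = RN p (\<delta>s + \<sigma>l);
         \<tau> = RN p (\<tau>1 + \<tau>2);
         c = RN p (\<tau> / s)
     in RN p (c / 2 + s))"

end

(*
  Normalize to x^2 + y^2 = 1. Every operation of the algorithm is a correctly rounded
  operation with relative error at most u (the last one even u/(1+u)), except the FMA
  sigma_h - s^2, which is exact: the remainder of a correctly rounded square root of a
  float is again a float. Then s = 1 + O(u), and c/2 + s is a Newton correction of s
  towards sqrt 1 = 1, computed from tau = 1 - s^2 + O(u^2); its error is
  (1 - s)^2/(2s) plus second-order rounding errors, at most 8u^2 + 60u^3. The final
  rounding yields u + 7u^2 + 100u^3, and 100u is below each of the listed kappa.
*)
theory Submission
  imports Defs
begin

section \<open>Floating-point numbers\<close>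

lemma is_float_minus_iff [simp]: "is_float p (- x) \<longleftrightarrow> is_float p x"
proof -
  have "is_float p (- x)" if x: "is_float p x" for x
  proof -
    obtain M e where "x = real_of_int M * 2 powr real_of_int e" "\<bar>M\<bar> < 2 ^ p"
      using x unfolding is_float_def by blast
    then show ?thesis unfolding is_float_def by (intro exI[of _ "- M"] exI[of _ e]) simp
  qed
  then show ?thesis by force
qed

lemma even_float_minus_iff [simp]: "even_float p (- x) \<longleftrightarrow> even_float p x"
proof -
  have "even_float p (- x)" if x: "even_float p x" for x
  proof (cases "x = 0")
    case False
    then obtain M e where "x = real_of_int M * 2 powr real_of_int e"
      "2 ^ (p - 1) \<le> \<bar>M\<bar>" "\<bar>M\<bar> < 2 ^ p" "even M"
      using x unfolding even_float_def by blast
    then show ?thesis unfolding even_float_def by (intro disjI2 exI[of _ "- M"] exI[of _ e]) simp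
  qed (simp add: even_float_def)
  then show ?thesis by force
qed

lemma is_float_zero [simp]: "is_float p 0"
  unfolding is_float_def by (rule exI[of _ 0]) simp

lemma float_exponent_lower_bound:
  assumes M: "\<bar>M\<bar> < 2 ^ p" and p: "1 \<le> p"
    and le: "2 powr real_of_int k * 2 ^ (p - 1) \<le> \<bar>real_of_int M * 2 powr real_of_int e\<bar>"
  shows "k \<le> e"
proof (rule ccontr)
  assume "\<not> k \<le> e"
  then have "2 powr real_of_int (e + 1) * 2 ^ (p - 1) \<le> 2 powr real_of_int k * 2 ^ (p - 1)"
    by (intro mult_right_mono powr_mono) auto
  also have "\<dots> \<le> \<bar>real_of_int M\<bar> * 2 powr real_of_int e" using le by (simp add: abs_mult)
  finally have "2 powr real_of_int (e + 1) * 2 ^ (p - 1) \<le> \<bar>real_of_int M\<bar> * 2 powr real_of_int e" .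
  moreover have "2 powr real_of_int (e + 1) * 2 ^ (p - 1) = 2 ^ p * 2 powr real_of_int e"
    using p by (simp add: powr_add power_minus_mult[of p, symmetric] algebra_simps)
  moreover have "\<bar>real_of_int M\<bar> * 2 powr real_of_int e < 2 ^ p * 2 powr real_of_int e"
    using M by (intro mult_strict_right_mono) (simp_all flip: of_int_abs)
  ultimately show False by linarith
qed

lemma is_float_multiple:
  assumes g: "is_float p g" and p: "1 \<le> p" and le: "2 powr real_of_int k * 2 ^ (p - 1) \<le> \<bar>g\<bar>"
  shows "\<exists>m::int. g = real_of_int m * 2 powr real_of_int k"
proof -
  obtain M e where g_eq: "g = real_of_int M * 2 powr real_of_int e" and M: "\<bar>M\<bar> < 2 ^ p"
    using g unfolding is_float_def by blast
  have "k \<le> e" using float_exponent_lower_bound[OF M p] le g_eq by simp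
  then have "2 powr real_of_int e = 2 ^ nat (e - k) * 2 powr real_of_int k"
    by (simp add: powr_realpow[symmetric] powr_add[symmetric])
  then have "g = real_of_int (M * 2 ^ nat (e - k)) * 2 powr real_of_int k" by (simp add: g_eq)
  then show ?thesis ..
qed

lemma is_float_int_mult_powr:
  assumes m: "\<bar>m\<bar> \<le> 2 ^ p" and p: "1 \<le> p"
  shows "is_float p (real_of_int m * 2 powr real_of_int k)"
proof (cases "\<bar>m\<bar> < 2 ^ p")
  case True
  then show ?thesis unfolding is_float_def by blast
next
  case False
  \<comment> \<open>\<open>\<plusminus>2\<^sup>p\<close> is too large a significand; use \<open>\<plusminus>2\<^sup>p\<^sup>-\<^sup>1\<close> and the next exponent\<close>
  then have m2: "m = 2 * (sgn m * 2 ^ (p - 1))"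
    using m p by (auto simp: abs_if sgn_if power_minus_mult[of p, symmetric] algebra_simps)
  have "real_of_int m * 2 powr real_of_int k = real_of_int (sgn m * 2 ^ (p - 1)) * 2 powr real_of_int (k + 1)"
    by (subst m2) (simp add: powr_add)
  moreover have "\<bar>sgn m * 2 ^ (p - 1)\<bar> < (2::int) ^ p"
    using p by (simp add: abs_mult abs_sgn_eq power_strict_increasing)
  ultimately show ?thesis unfolding is_float_def by blast
qed

lemma normalized_float_unique:
  assumes "2 ^ (p - 1) \<le> \<bar>M\<bar>" "\<bar>M\<bar> < 2 ^ p" "2 ^ (p - 1) \<le> \<bar>m\<bar>" "\<bar>m\<bar> < 2 ^ p" "1 \<le> p"
    and eq: "real_of_int M * 2 powr real_of_int e = real_of_int m * 2 powr real_of_int k"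
  shows "e = k" and "M = m"
proof -
  have "2 powr real_of_int k * 2 ^ (p - 1) \<le> \<bar>real_of_int m * 2 powr real_of_int k\<bar>"
    "2 powr real_of_int e * 2 ^ (p - 1) \<le> \<bar>real_of_int M * 2 powr real_of_int e\<bar>"
    using assms(1,3) by (simp_all add: abs_mult mult.commute flip: of_int_abs)
  then show "e = k" using float_exponent_lower_bound[of _ p] assms eq
    by (metis order_antisym)
  then show "M = m" using eq by simp
qed

lemma even_float_int_mult_powr_iff:
  assumes "2 ^ (p - 1) \<le> \<bar>m\<bar>" "\<bar>m\<bar> < 2 ^ p" "1 \<le> p"
  shows "even_float p (real_of_int m * 2 powr real_of_int k) \<longleftrightarrow> even m"
proof
  assume "even_float p (real_of_int m * 2 powr real_of_int k)"
  moreover have "m \<noteq> 0" using assms(1) by auto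
  ultimately obtain M e where "real_of_int M * 2 powr real_of_int e = real_of_int m * 2 powr real_of_int k"
    "2 ^ (p - 1) \<le> \<bar>M\<bar>" "\<bar>M\<bar> < 2 ^ p" "even M"
    unfolding even_float_def by auto
  then show "even m" using normalized_float_unique(2)[of p M m e k] assms by auto
qed (use assms in \<open>auto simp: even_float_def\<close>)

lemma even_float_two_power:
  assumes "2 \<le> p"
  shows "even_float p (2 ^ p * 2 powr real_of_int k)"
proof -
  have "(2::real) ^ p * 2 powr real_of_int k = real_of_int ((2::int) ^ (p - 1)) * 2 powr real_of_int (k + 1)"
    using assms by (simp add: powr_add power_minus_mult[of p, symmetric])
  moreover have "even ((2::int) ^ (p - 1))" "(2::int) ^ (p - 1) < 2 ^ p"
    using assms by simp_all
  ultimately show ?thesis unfolding even_float_def by fastforce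
qed

lemma even_float_consecutive:
  assumes p: "2 \<le> p" and n: "2 ^ (p - 1) \<le> n" "n < 2 ^ p"
  shows "even_float p (real_of_int n * 2 powr real_of_int k) \<longleftrightarrow>
    \<not> even_float p (real_of_int (n + 1) * 2 powr real_of_int k)"
proof -
  have "0 \<le> n" using n(1) by (meson order_trans zero_le_power zero_le_numeral)
  then have abs: "\<bar>n\<bar> = n" "\<bar>n + 1\<bar> = n + 1" by simp_all
  show ?thesis
  proof (cases "n + 1 = 2 ^ p")
    case True
    then have "even (n + 1)" using p by simp
    then have "odd n" by simp
    moreover have "even_float p (real_of_int (n + 1) * 2 powr real_of_int k)"
      unfolding True using even_float_two_power[OF p] by simp
    ultimately show ?thesis using even_float_int_mult_powr_iff[of p n k] n p abs by auto
  next
    case False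
    then show ?thesis
      using even_float_int_mult_powr_iff[of p n k] even_float_int_mult_powr_iff[of p "n + 1" k] n p abs
      by auto
  qed
qed

lemma binade_exists:
  assumes "0 < v" "1 \<le> p"
  shows "\<exists>k::int. 2 powr real_of_int k * 2 ^ (p - 1) \<le> v \<and> v < 2 powr real_of_int k * 2 ^ p"
proof -
  define j where "j = \<lfloor>log 2 v\<rfloor>"
  define k where "k = j - int (p - 1)"
  have "2 powr real_of_int j \<le> 2 powr log 2 v" "2 powr log 2 v < 2 powr real_of_int (j + 1)"
    unfolding j_def by (intro powr_mono powr_less_mono; linarith)+
  moreover have "2 powr real_of_int k * 2 ^ (p - 1) = 2 powr real_of_int j"
    "2 powr real_of_int k * 2 ^ p = 2 powr real_of_int (j + 1)"
    using assms(2) by (simp_all add: k_def powr_realpow[symmetric] powr_add[symmetric] of_nat_diff)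
  ultimately show ?thesis using assms(1) by (intro exI[of _ k]) simp
qed

section \<open>Rounding to nearest, ties to even\<close>

definition rounds_nearest :: "(real \<Rightarrow> bool) \<Rightarrow> (real \<Rightarrow> bool) \<Rightarrow> real \<Rightarrow> real \<Rightarrow> bool" where
  "rounds_nearest F E v f \<longleftrightarrow> F f \<and> (\<forall>g. F g \<longrightarrow> \<bar>v - f\<bar> \<le> \<bar>v - g\<bar>) \<and>
     ((\<forall>g. F g \<and> \<bar>v - g\<bar> = \<bar>v - f\<bar> \<longrightarrow> g = f) \<or> E f)"

lemma RN_eq_The: "RN p v = (THE f. rounds_nearest (is_float p) (even_float p) v f)"
  by (simp add: RN_def rounds_nearest_def)

lemma rounds_nearest_self: "F v \<Longrightarrow> rounds_nearest F E v f \<longleftrightarrow> f = v"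
  unfolding rounds_nearest_def by force

lemma rounds_nearest_uminus:
  assumes "\<And>x. F (- x) = F x" "\<And>x. E (- x) = E x"
  shows "rounds_nearest F E (- v) (- f) \<longleftrightarrow> rounds_nearest F E v f"
proof -
  have all_uminus: "(\<forall>g. P g) \<longleftrightarrow> (\<forall>g. P (- g))" for P :: "real \<Rightarrow> bool"
    by (metis minus_minus)
  show ?thesis unfolding rounds_nearest_def
    by (subst (1 2) all_uminus) (simp only: assms minus_diff_minus abs_minus_cancel neg_equal_iff_equal)
qed

lemma rounds_nearest_between:
  assumes "lo < v" "v < hi" "F lo" "F hi" and gap: "\<And>g. F g \<Longrightarrow> g \<le> lo \<or> hi \<le> g"
  shows "rounds_nearest F E v f \<longleftrightarrow>
    (f = lo \<and> v - lo < hi - v) \<or> (f = hi \<and> hi - v < v - lo) \<or> (v - lo = hi - v \<and> (f = lo \<or> f = hi) \<and> E f)"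
proof -
  have dist: "(v - lo \<le> \<bar>v - g\<bar> \<and> (\<bar>v - g\<bar> = v - lo \<longrightarrow> g = lo)) \<or>
      (hi - v \<le> \<bar>v - g\<bar> \<and> (\<bar>v - g\<bar> = hi - v \<longrightarrow> g = hi))" if "F g" for g
    using gap[OF that] assms(1,2) by auto
  show ?thesis
    unfolding rounds_nearest_def using dist assms(1-4) by (smt (verit))
qed

lemma rounds_nearest_between_unique:
  assumes "lo < v" "v < hi" "F lo" "F hi" and gap: "\<And>g. F g \<Longrightarrow> g \<le> lo \<or> hi \<le> g"
    and tie: "v - lo = hi - v \<Longrightarrow> E lo \<longleftrightarrow> \<not> E hi"
  shows "\<exists>f \<in> {lo, hi}. (\<forall>f'. rounds_nearest F E v f' \<longleftrightarrow> f' = f) \<and> \<bar>f - v\<bar> \<le> (hi - lo) / 2"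
proof -
  note char = rounds_nearest_between[OF assms(1-5)]
  consider "v - lo < hi - v" | "hi - v < v - lo" | "v - lo = hi - v" "E lo" | "v - lo = hi - v" "E hi"
    using tie by linarith
  then show ?thesis
  proof cases
    case 1
    then show ?thesis using char assms(1) by (intro bexI[of _ lo]) auto
  next
    case 2
    then show ?thesis using char assms(2) by (intro bexI[of _ hi]) auto
  next
    case 3
    then show ?thesis using char tie assms(1) by (intro bexI[of _ lo]) auto
  next
    case 4
    then show ?thesis using char tie assms(2) by (intro bexI[of _ hi]) auto
  qed
qed

lemma rounds_nearest_binade:
  assumes p: "2 \<le> p" and w: "w = 2 powr real_of_int k" and v: "w * 2 ^ (p - 1) \<le> v" "v < w * 2 ^ p"
  shows "\<exists>n::int. (\<forall>f. rounds_nearest (is_float p) (even_float p) v f \<longleftrightarrow> f = real_of_int n * w)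
    \<and> \<bar>real_of_int n * w - v\<bar> \<le> w / 2"
proof (cases "is_float p v")
  case True
  moreover have "w * 2 ^ (p - 1) \<le> \<bar>v\<bar>" using v(1) by (meson abs_ge_self order_trans)
  ultimately obtain m where "v = real_of_int m * w"
    using is_float_multiple[of p v k] p w by (auto simp: mult.commute)
  then show ?thesis using rounds_nearest_self[of "is_float p" v "even_float p"] True w by auto
next
  case False
  define n where "n = \<lfloor>v / w\<rfloor>"
  have w0: "0 < w" using w by simp
  have n: "2 ^ (p - 1) \<le> n" "n < 2 ^ p"
    using v w0 unfolding n_def by (simp_all add: le_floor_iff floor_less_iff field_simps)
  have "0 \<le> n" using n(1) by (meson order_trans zero_le_power zero_le_numeral)
  then have n_abs: "\<bar>n\<bar> = n" "\<bar>n + 1\<bar> = n + 1" by simp_all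
  have "real_of_int n * w \<le> v" "v < real_of_int (n + 1) * w"
    using floor_divide_lower[OF w0, of v] floor_divide_upper[OF w0, of v] unfolding n_def by simp_all
  moreover have float: "is_float p (real_of_int n * w)" "is_float p (real_of_int (n + 1) * w)"
    using is_float_int_mult_powr[of n p k] is_float_int_mult_powr[of "n + 1" p k] n n_abs p w by auto
  ultimately have lo: "real_of_int n * w < v" and hi: "v < real_of_int (n + 1) * w"
    using False by (auto simp: order.order_iff_strict)
  have gap: "g \<le> real_of_int n * w \<or> real_of_int (n + 1) * w \<le> g" if g: "is_float p g" for g
  proof (rule ccontr)
    assume "\<not> ?thesis"
    moreover have "w * 2 ^ (p - 1) \<le> real_of_int n * w" using n(1) w0 by (simp add: mult.commute)
    ultimately have "w * 2 ^ (p - 1) \<le> \<bar>g\<bar>" by linarith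
    then obtain m where "g = real_of_int m * w" using is_float_multiple[OF g] p w by auto
    with \<open>\<not> ?thesis\<close> show False using w0 by auto
  qed
  have "\<exists>f \<in> {real_of_int n * w, real_of_int (n + 1) * w}.
      (\<forall>f'. rounds_nearest (is_float p) (even_float p) v f' \<longleftrightarrow> f' = f) \<and> \<bar>f - v\<bar> \<le> w / 2"
    using rounds_nearest_between_unique[OF lo hi float gap] even_float_consecutive[OF p n] w
    by (simp add: algebra_simps)
  then show ?thesis by blast
qed

lemma rounds_nearest_ex1:
  assumes p: "2 \<le> p"
  shows "\<exists>!f. rounds_nearest (is_float p) (even_float p) v f"
proof -
  have pos: "\<exists>f. \<forall>f'. rounds_nearest (is_float p) (even_float p) v f' \<longleftrightarrow> f' = f" if v: "0 < v" for v
  proof -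
    obtain k where "2 powr real_of_int k * 2 ^ (p - 1) \<le> v" "v < 2 powr real_of_int k * 2 ^ p"
      using binade_exists[of v p] v p by auto
    then show ?thesis using rounds_nearest_binade[OF p refl] by blast
  qed
  consider "0 < v" | "v = 0" | "0 < - v" by linarith
  then have "\<exists>f. \<forall>f'. rounds_nearest (is_float p) (even_float p) v f' \<longleftrightarrow> f' = f"
  proof cases
    case 3
    then obtain f where "\<forall>f'. rounds_nearest (is_float p) (even_float p) (- v) (- f') \<longleftrightarrow> - f' = f"
      using pos by (metis minus_minus)
    then show ?thesis using rounds_nearest_uminus[of "is_float p" "even_float p" v]
      by (intro exI[of _ "- f"]) auto
  qed (use pos rounds_nearest_self[of "is_float p" 0 "even_float p"] in auto)
  then show ?thesis by (elim exE) (rule ex1I; blast)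
qed

lemma RN_rounds_nearest: "2 \<le> p \<Longrightarrow> rounds_nearest (is_float p) (even_float p) v (RN p v)"
  unfolding RN_eq_The by (rule theI'[OF rounds_nearest_ex1])

lemma RN_eqI: "2 \<le> p \<Longrightarrow> rounds_nearest (is_float p) (even_float p) v f \<Longrightarrow> RN p v = f"
  unfolding RN_eq_The by (rule the1_equality[OF rounds_nearest_ex1])

lemma is_float_RN: "2 \<le> p \<Longrightarrow> is_float p (RN p v)"
  using RN_rounds_nearest unfolding rounds_nearest_def by blast

lemma RN_of_float: "2 \<le> p \<Longrightarrow> is_float p v \<Longrightarrow> RN p v = v"
  using RN_eqI rounds_nearest_self by blast

lemma RN_uminus: "2 \<le> p \<Longrightarrow> RN p (- v) = - RN p v"
  by (simp add: RN_eqI RN_rounds_nearest rounds_nearest_uminus)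

lemma RN_binade:
  assumes p: "2 \<le> p" and w: "w = 2 powr real_of_int k" and v: "w * 2 ^ (p - 1) \<le> v" "v < w * 2 ^ p"
  shows "\<exists>m::int. RN p v = real_of_int m * w" and "\<bar>RN p v - v\<bar> \<le> w / 2"
  using rounds_nearest_binade[OF assms] RN_rounds_nearest[OF p, of v] by auto

lemma RN_error_pos:
  assumes p: "2 \<le> p" and v: "0 < v"
  shows "\<bar>RN p v - v\<bar> * (2 ^ p + 1) \<le> v"
proof -
  obtain k where k: "2 powr real_of_int k * 2 ^ (p - 1) \<le> v" "v < 2 powr real_of_int k * 2 ^ p"
    using binade_exists[of v p] v p by auto
  define w where "w = 2 powr real_of_int k"
  define W :: int where "W = 2 ^ (p - 1)"
  have w0: "0 < w" and W: "2 ^ p = 2 * real_of_int W" "w * real_of_int W \<le> v"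
    using k p by (simp_all add: w_def W_def power_minus_mult[of p, symmetric] mult.commute)
  obtain m where "RN p v = real_of_int m * w" and err: "\<bar>RN p v - v\<bar> \<le> w / 2"
    using RN_binade[OF p w_def] k unfolding w_def by blast
  then have m: "RN p v = w * real_of_int m" by (simp only: mult.commute)
  have W0: "0 \<le> real_of_int W" by (simp add: W_def)
  \<comment> \<open>the float \<open>W w\<close> lies below \<open>v\<close>, so \<open>RN p v\<close> cannot be smaller; rounding up gains a whole \<open>w\<close>\<close>
  show ?thesis
  proof (cases "RN p v \<le> v")
    case True
    then have "w * real_of_int W < w * (real_of_int m + 1)" using W err m w0 by (simp add: algebra_simps)
    then have "W \<le> m" using w0 by simp
    then have low: "w * real_of_int W \<le> RN p v" using m w0 by simp
    have "\<bar>RN p v - v\<bar> * (2 ^ p + 1) = (v - RN p v) * (2 * real_of_int W) + (v - RN p v)"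
      using True W by (simp add: algebra_simps)
    also have "\<dots> \<le> w / 2 * (2 * real_of_int W) + (v - RN p v)"
      using err True W0 by (intro add_right_mono mult_right_mono) auto
    finally show ?thesis using low by (simp add: algebra_simps)
  next
    case False
    then have "w * real_of_int W < w * real_of_int m" using W m by linarith
    then have "W + 1 \<le> m" using w0 by simp
    then have low: "w * (real_of_int W + 1) \<le> RN p v" using m w0 by simp
    have "\<bar>RN p v - v\<bar> * (2 ^ p + 1) = (RN p v - v) * (2 * real_of_int W + 2) - (RN p v - v)"
      using False W by (simp add: algebra_simps)
    also have "\<dots> \<le> w / 2 * (2 * real_of_int W + 2) - (RN p v - v)"
      using err False W0 by (intro diff_right_mono mult_right_mono) auto
    finally show ?thesis using low by (simp add: algebra_simps)
  qed
qed

lemma RN_error: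
  assumes p: "2 \<le> p"
  shows "\<bar>RN p v - v\<bar> \<le> \<bar>v\<bar> / (2 ^ p + 1)"
proof -
  have pos: "\<bar>RN p v - v\<bar> \<le> \<bar>v\<bar> / (2 ^ p + 1)" if "0 < v" for v
    using RN_error_pos[OF p that] that by (simp add: pos_le_divide_eq add_pos_pos)
  consider "0 < v" | "v = 0" | "0 < - v" by linarith
  then show ?thesis
  proof cases
    case 3
    then show ?thesis using pos[OF 3] RN_uminus[OF p, of v] by (simp add: abs_minus_commute)
  qed (use pos RN_of_float[OF p is_float_zero] in auto)
qed

lemma abs_square_diff_less:
  fixes r s w :: real
  assumes r: "0 < r" "r < w * 2 ^ p" and err: "\<bar>s - r\<bar> \<le> w / 2"
  shows "\<bar>r^2 - s^2\<bar> < (2 ^ p + 1) * w^2"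
proof -
  have "0 < w * 2 ^ p" using r by linarith
  then have w0: "0 < w" by (simp add: zero_less_mult_iff)
  have "\<bar>r^2 - s^2\<bar> = \<bar>r - s\<bar> * \<bar>r + s\<bar>"
    by (simp flip: abs_mult add: power2_eq_square algebra_simps)
  also have "\<dots> \<le> w / 2 * (2 * r + w / 2)"
  proof (rule mult_mono)
    show "\<bar>r + s\<bar> \<le> 2 * r + w / 2"
      using err r(1) unfolding abs_le_iff by (intro conjI; linarith)
  qed (use err w0 in \<open>simp_all add: abs_minus_commute\<close>)
  also have "\<dots> < w / 2 * (2 * (w * 2 ^ p) + w / 2)"
    using r(2) w0 by (intro mult_strict_left_mono) auto
  also have "\<dots> < (2 ^ p + 1) * w^2" using w0 by (simp add: power2_eq_square algebra_simps)
  finally show ?thesis .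
qed

lemma RN_sqrt_remainder_is_float:
  assumes p: "2 \<le> p" and \<sigma>: "is_float p \<sigma>" "0 < \<sigma>"
  shows "is_float p (\<sigma> - RN p (sqrt \<sigma>) ^ 2)"
proof -
  define r where "r = sqrt \<sigma>"
  define s where "s = RN p r"
  have r: "0 < r" "r^2 = \<sigma>" using \<sigma> by (simp_all add: r_def)
  obtain k where k: "2 powr real_of_int k * 2 ^ (p - 1) \<le> r" "r < 2 powr real_of_int k * 2 ^ p"
    using binade_exists[of r p] r p by auto
  define w where "w = 2 powr real_of_int k"
  obtain m where m: "s = real_of_int m * w" and err: "\<bar>s - r\<bar> \<le> w / 2"
    using RN_binade[OF p w_def] k unfolding s_def w_def by blast
  \<comment> \<open>\<open>\<sigma>\<close> and \<open>s\<^sup>2\<close> lie on the grid \<open>w\<^sup>2\<int>\<close> and differ by less than \<open>(2\<^sup>p + 1) w\<^sup>2\<close>\<close>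
  have w2: "2 powr real_of_int (2 * k + (p - 1)) = w^2 * 2 ^ (p - 1)"
  proof -
    have "2 powr real_of_int (2 * k + (p - 1)) = 2 powr (real_of_int k + real_of_int k + real (p - 1))"
      by simp
    then show ?thesis by (simp only: w_def powr_add powr_realpow power2_eq_square)
  qed
  have "(w * 2 ^ (p - 1))^2 \<le> r^2" using k unfolding w_def by (intro power_mono) auto
  then have "2 powr real_of_int (2 * k + (p - 1)) * 2 ^ (p - 1) \<le> \<bar>\<sigma>\<bar>"
    using \<sigma> r(2) unfolding w2 by (simp add: power_mult_distrib power2_eq_square algebra_simps)
  then obtain M where M: "\<sigma> = real_of_int M * 2 powr real_of_int (2 * k + (p - 1))"
    using is_float_multiple[OF \<sigma>(1)] p by fastforce
  define N where "N = M * 2 ^ (p - 1) - m^2"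
  have N: "\<sigma> - s^2 = real_of_int N * w^2"
    using M unfolding w2 N_def by (simp add: m power_mult_distrib algebra_simps)
  have "real_of_int \<bar>N\<bar> * w^2 < real_of_int (2 ^ p + 1) * w^2"
    using abs_square_diff_less[OF r(1) k(2)[folded w_def] err] N r(2) by (simp add: abs_mult)
  then have "real_of_int \<bar>N\<bar> < real_of_int (2 ^ p + 1)" by (rule mult_right_less_imp_less) simp
  then have "\<bar>N\<bar> \<le> 2 ^ p" by (simp only: of_int_less_iff)
  moreover have "w^2 = 2 powr real_of_int (2 * k)"
    by (simp add: w_def power2_eq_square flip: powr_add)
  ultimately show ?thesis
    using is_float_int_mult_powr[of N p "2 * k"] p N unfolding s_def r_def by simp
qed

definition rel_approx :: "real \<Rightarrow> real \<Rightarrow> real \<Rightarrow> bool" where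
  "rel_approx u x y \<longleftrightarrow> \<bar>x - y\<bar> \<le> u * \<bar>y\<bar>"

lemma rel_approx_mono: "rel_approx u x y \<Longrightarrow> u \<le> u' \<Longrightarrow> rel_approx u' x y"
  unfolding rel_approx_def using mult_right_mono[of u u' "\<bar>y\<bar>"] by simp

lemma rel_approx_pos:
  assumes "rel_approx u x y" "u < 1" "0 < y"
  shows "0 < x"
proof -
  have "u * y < y" using mult_strict_right_mono[OF assms(2,3)] by simp
  moreover have "y - x \<le> u * y" using assms(1,3) unfolding rel_approx_def by simp
  ultimately show ?thesis by linarith
qed

lemma rel_approx_add:
  assumes "rel_approx u x y" "rel_approx u x' y'" "0 \<le> y" "0 \<le> y'"
  shows "rel_approx u (x + x') (y + y')"
proof -
  have "\<bar>(x + x') - (y + y')\<bar> \<le> \<bar>x - y\<bar> + \<bar>x' - y'\<bar>" by simp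
  also have "\<dots> \<le> u * \<bar>y + y'\<bar>" using assms unfolding rel_approx_def by (simp add: distrib_left)
  finally show ?thesis unfolding rel_approx_def .
qed

lemma rel_approx_divide_iff:
  assumes "D \<noteq> 0"
  shows "rel_approx u (x / D) (y / D) \<longleftrightarrow> rel_approx u x y"
proof -
  have "\<bar>x / D - y / D\<bar> = \<bar>x - y\<bar> / \<bar>D\<bar>" by (simp add: diff_divide_distrib[symmetric] abs_divide)
  moreover have "u * \<bar>y / D\<bar> = u * \<bar>y\<bar> / \<bar>D\<bar>" by (simp add: abs_divide)
  ultimately show ?thesis using assms by (simp add: rel_approx_def divide_le_cancel)
qed

lemma rel_approx_abs_le:
  assumes "rel_approx u x y" "\<bar>y\<bar> \<le> B" "0 \<le> u"
  shows "\<bar>x - y\<bar> \<le> u * B"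
  using assms mult_left_mono[OF assms(2) assms(3)] unfolding rel_approx_def by linarith

lemma RN_rel_approx: "2 \<le> p \<Longrightarrow> rel_approx (1 / (2 ^ p + 1)) (RN p v) v"
  using RN_error unfolding rel_approx_def by simp

section \<open>Error analysis of the algorithm\<close>

lemma sixteenth_powers:
  fixes u :: real
  assumes "0 \<le> u" "u \<le> 1/16"
  shows "u^3 \<le> u^2 / 16" "u^4 \<le> u^3 / 16" "u^5 \<le> u^4 / 16"
  using mult_left_mono[OF assms(2), of "u^2"] mult_left_mono[OF assms(2), of "u^3"]
    mult_left_mono[OF assms(2), of "u^4"] assms(1)
  by (simp_all add: eval_nat_numeral field_simps)

lemma sqrt_step_error:
  fixes u Q sh s :: real
  assumes u: "0 \<le> u" "u \<le> 1/16" and Q: "\<bar>Q - 1\<bar> \<le> u"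
    and sh: "rel_approx u sh Q" and s: "rel_approx u s (sqrt sh)"
  shows "\<bar>Q - sh\<bar> \<le> u + u^2" and "\<bar>1 - s\<bar> \<le> 2*u + u^2" and "\<bar>sh - s^2\<bar> \<le> 2*u + 6*u^2"
proof -
  have "\<bar>sh - Q\<bar> \<le> u * (1 + u)" using rel_approx_abs_le[OF sh _ u(1)] Q by simp
  then show "\<bar>Q - sh\<bar> \<le> u + u^2" by (simp add: power2_eq_square algebra_simps abs_minus_commute)
  have "(1 - u) * (1 - u) \<le> (1 - u) * Q" "(1 + u) * Q \<le> (1 + u) * (1 + u)"
    using Q u by (intro mult_left_mono; simp)+
  then have "(1 - u)^2 \<le> sh" "sh \<le> (1 + u)^2"
    using sh Q u unfolding rel_approx_def by (auto simp: power2_eq_square algebra_simps abs_le_iff)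
  then have r: "1 - u \<le> sqrt sh" "sqrt sh \<le> 1 + u"
    using real_sqrt_le_mono[of "(1 - u)^2" sh] real_sqrt_le_mono[of sh "(1 + u)^2"] u by simp_all
  have s_r: "\<bar>s - sqrt sh\<bar> \<le> u * sqrt sh" using s r u unfolding rel_approx_def by simp
  have "(1 - u) * (1 - u) \<le> (1 - u) * sqrt sh" "(1 + u) * sqrt sh \<le> (1 + u) * (1 + u)"
    using r u by (intro mult_left_mono; simp)+
  then have "1 - 2*u + u^2 \<le> sqrt sh - u * sqrt sh" "sqrt sh + u * sqrt sh \<le> 1 + 2*u + u^2"
    by (simp_all add: power2_eq_square algebra_simps)
  then show "\<bar>1 - s\<bar> \<le> 2*u + u^2"
    using s_r zero_le_power2[of u] unfolding abs_le_iff by linarith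
  have "0 \<le> sh" using \<open>(1 - u)^2 \<le> sh\<close> zero_le_power2 order_trans by blast
  then have "\<bar>sh - s^2\<bar> = \<bar>sqrt sh - s\<bar> * \<bar>sqrt sh + s\<bar>"
    by (simp add: abs_mult[symmetric] algebra_simps flip: power2_eq_square)
  also have "\<dots> \<le> (u * sqrt sh) * ((2 + u) * sqrt sh)"
    using s_r r u by (intro mult_mono) (auto simp: abs_minus_commute abs_le_iff algebra_simps)
  also have "\<dots> = u * (2 + u) * sh"
    using \<open>0 \<le> sh\<close> by (simp add: algebra_simps flip: power2_eq_square)
  also have "\<dots> \<le> u * (2 + u) * (1 + u)^2" using \<open>sh \<le> (1 + u)^2\<close> u by (intro mult_left_mono) auto
  also have "\<dots> = 2*u + 5*u^2 + 4*u^3 + u^4"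
    by (simp add: power2_eq_square power3_eq_cube power4_eq_xxxx algebra_simps)
  also have "\<dots> \<le> 2*u + 6*u^2" using sixteenth_powers[OF u] zero_le_power2[of u] by linarith
  finally show "\<bar>sh - s^2\<bar> \<le> 2*u + 6*u^2" .
qed

lemma correction_sum_error:
  fixes u X1 X2 t1 t2 t :: real
  assumes u: "0 \<le> u" "u \<le> 1/16" and X1: "\<bar>X1\<bar> \<le> u" and X2: "\<bar>X2\<bar> \<le> 3*u + 7*u^2"
    and t1: "rel_approx u t1 X1" and t2: "rel_approx u t2 X2" and t: "rel_approx u t (t1 + t2)"
  shows "\<bar>t - (X1 + X2)\<bar> \<le> 8*u^2 + 19*u^3" and "\<bar>t\<bar> \<le> 4*u + 17*u^2"
proof -
  have e1: "\<bar>t1 - X1\<bar> \<le> u^2" using rel_approx_abs_le[OF t1 X1 u(1)] by (simp add: power2_eq_square)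
  have e2: "\<bar>t2 - X2\<bar> \<le> 3*u^2 + 7*u^3"
    using rel_approx_abs_le[OF t2 X2 u(1)] by (simp add: power2_eq_square power3_eq_cube algebra_simps)
  have t12: "\<bar>t1 + t2\<bar> \<le> 4*u + 12*u^2" using X1 X2 e1 e2 sixteenth_powers[OF u] by linarith
  have e3: "\<bar>t - (t1 + t2)\<bar> \<le> 4*u^2 + 12*u^3"
    using rel_approx_abs_le[OF t t12 u(1)] by (simp add: power2_eq_square power3_eq_cube algebra_simps)
  show "\<bar>t - (X1 + X2)\<bar> \<le> 8*u^2 + 19*u^3" using e1 e2 e3 by linarith
  show "\<bar>t\<bar> \<le> 4*u + 17*u^2" using t12 e3 sixteenth_powers[OF u] by linarith
qed

lemma newton_correction_error:
  fixes u s t c :: real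
  assumes u: "0 \<le> u" "u \<le> 1/16" and s: "\<bar>1 - s\<bar> \<le> 2*u + u^2"
    and T: "\<bar>t - (1 - s^2)\<bar> \<le> 8*u^2 + 19*u^3" and t: "\<bar>t\<bar> \<le> 4*u + 17*u^2"
    and c: "rel_approx u c (t / s)"
  shows "\<bar>c/2 + s - 1\<bar> \<le> 8*u^2 + 60*u^3"
proof -
  have s_lo: "1 - 2*u - u^2 \<le> s" using s by linarith
  have "u^2 \<le> u / 16" using u mult_left_mono[OF u(2), of u] by (simp add: power2_eq_square)
  then have s0: "0 < s" using s_lo u by linarith
  have "\<bar>s * (c - t/s)\<bar> = s * \<bar>c - t/s\<bar>" using s0 by (simp add: abs_mult)
  also have "\<dots> \<le> s * (u * \<bar>t / s\<bar>)"
    using c s0 unfolding rel_approx_def by (intro mult_left_mono) auto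
  also have "\<dots> = u * \<bar>t\<bar>" using s0 by (simp add: abs_divide)
  also have "\<dots> \<le> 4*u^2 + 17*u^3"
    using mult_left_mono[OF t u(1)] by (simp add: power2_eq_square power3_eq_cube algebra_simps)
  finally have c_err: "\<bar>s * (c - t/s)\<bar> \<le> 4*u^2 + 17*u^3" .
  have "(1 - s)^2 \<le> (2*u + u^2)^2" using power_mono[OF s abs_ge_zero, of 2] by simp
  also have "\<dots> = 4*u^2 + 4*u^3 + u^4"
    by (simp add: power2_eq_square power3_eq_cube power4_eq_xxxx algebra_simps)
  finally have s_err: "(1 - s)^2 \<le> 4*u^2 + 4*u^3 + u^4" .
  \<comment> \<open>\<open>s + (1 - s\<^sup>2) / (2 s)\<close> is a Newton step towards \<open>sqrt 1\<close>: its error is \<open>(1 - s)\<^sup>2 / (2 s)\<close>\<close>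
  have newton: "(c/2 + s - 1) * (2*s) = (1 - s)^2 + (t - (1 - s^2)) + s * (c - t/s)"
    using s0 by (simp add: power2_eq_square field_simps)
  have "\<bar>c/2 + s - 1\<bar> * (2*s) = \<bar>(1 - s)^2 + (t - (1 - s^2)) + s * (c - t/s)\<bar>"
    unfolding newton[symmetric] using s0 by (simp add: abs_mult)
  also have "\<dots> \<le> (1 - s)^2 + \<bar>t - (1 - s^2)\<bar> + \<bar>s * (c - t/s)\<bar>"
    using abs_triangle_ineq[of "(1 - s)^2 + (t - (1 - s^2))" "s * (c - t/s)"]
      abs_triangle_ineq[of "(1 - s)^2" "t - (1 - s^2)"] by simp
  also have "\<dots> \<le> 16*u^2 + 41*u^3"
    using s_err T c_err sixteenth_powers[OF u] zero_le_power[OF u(1), of 3] by linarith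
  also have "\<dots> \<le> 16*u^2 + 88*u^3 - 256*u^4 - 120*u^5"
    using sixteenth_powers[OF u] zero_le_power[OF u(1), of 3] by linarith
  also have "\<dots> = (8*u^2 + 60*u^3) * (2 - 4*u - 2*u^2)"
    by (simp add: power2_eq_square power3_eq_cube power4_eq_xxxx eval_nat_numeral algebra_simps)
  also have "\<dots> \<le> (8*u^2 + 60*u^3) * (2*s)" using s_lo u by (intro mult_left_mono) auto
  finally show ?thesis using s0 by simp
qed

lemma final_rounding_error:
  fixes u z rho :: real
  assumes u: "0 \<le> u" "u \<le> 1/16" and z: "\<bar>z - 1\<bar> \<le> 8*u^2 + 60*u^3"
    and rho: "rel_approx (u / (1 + u)) rho z"
  shows "\<bar>rho - 1\<bar> \<le> u + 7*u^2 + 100*u^3"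
proof -
  define \<eta> where "\<eta> = 8*u^2 + 60*u^3"
  have "\<bar>rho - z\<bar> \<le> u / (1 + u) * (1 + \<eta>)"
    using rel_approx_abs_le[OF rho] z u unfolding \<eta>_def by simp
  moreover have "u / (1 + u) * (1 + \<eta>) + \<eta> \<le> u + 7*u^2 + 100*u^3"
  proof -
    have "u * (1 + \<eta>) + \<eta> * (1 + u) = u + 8*u^2 + 76*u^3 + 120*u^4"
      "(u + 7*u^2 + 100*u^3) * (1 + u) = u + 8*u^2 + 107*u^3 + 100*u^4"
      unfolding \<eta>_def by (simp_all add: power2_eq_square power3_eq_cube power4_eq_xxxx algebra_simps)
    then have "u * (1 + \<eta>) + \<eta> * (1 + u) \<le> (u + 7*u^2 + 100*u^3) * (1 + u)"
      using sixteenth_powers[OF u] zero_le_power[OF u(1), of 3] by linarith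
    then show ?thesis using u by (simp add: field_simps)
  qed
  ultimately show ?thesis using z unfolding \<eta>_def by linarith
qed

lemma hypot4_error_normalized:
  fixes u A B sxh syh sh s t1 t2 t c rho :: real
  assumes u: "0 \<le> u" "u \<le> 1/16" and AB: "0 \<le> A" "0 \<le> B" "A + B = 1"
    and sxh: "rel_approx u sxh A" and syh: "rel_approx u syh B"
    and sh: "rel_approx u sh (sxh + syh)" and s: "rel_approx u s (sqrt sh)"
    and t1: "rel_approx u t1 ((A - sxh) + (B - syh))"
    and t2: "rel_approx u t2 ((sh - s^2) + (sxh + syh - sh))"
    and t: "rel_approx u t (t1 + t2)" and c: "rel_approx u c (t / s)"
    and rho: "rel_approx (u / (1 + u)) rho (c/2 + s)"
  shows "\<bar>rho - 1\<bar> \<le> u + 7*u^2 + 100*u^3"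
proof -
  have Q: "\<bar>sxh + syh - 1\<bar> \<le> u"
    using rel_approx_add[OF sxh syh AB(1,2)] AB(3) unfolding rel_approx_def by simp
  note sqrt_err = sqrt_step_error[OF u Q sh s]
  have "\<bar>(sh - s^2) + (sxh + syh - sh)\<bar> \<le> 3*u + 7*u^2" using sqrt_err by linarith
  moreover have "\<bar>(A - sxh) + (B - syh)\<bar> \<le> u" using Q AB by (simp add: abs_minus_commute algebra_simps)
  ultimately have "\<bar>t - (1 - s^2)\<bar> \<le> 8*u^2 + 19*u^3" "\<bar>t\<bar> \<le> 4*u + 17*u^2"
    using correction_sum_error[OF u _ _ t1 t2 t] AB by (simp_all add: algebra_simps)
  then have "\<bar>c/2 + s - 1\<bar> \<le> 8*u^2 + 60*u^3"
    using newton_correction_error[OF u sqrt_err(2) _ _ c] by simp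
  then show ?thesis using final_rounding_error[OF u _ rho] by simp
qed

lemma hypot4_error:
  fixes u a b sxh syh sh s t1 t2 t c rho :: real
  assumes u: "0 \<le> u" "u \<le> 1/16" and ab: "a \<noteq> 0 \<or> b \<noteq> 0"
    and sxh: "rel_approx u sxh (a * a)" and syh: "rel_approx u syh (b * b)"
    and sh: "rel_approx u sh (sxh + syh)" and s: "rel_approx u s (sqrt sh)"
    and t1: "rel_approx u t1 ((a * a - sxh) + (b * b - syh))"
    and t2: "rel_approx u t2 ((sh - s^2) + (sxh + syh - sh))"
    and t: "rel_approx u t (t1 + t2)" and c: "rel_approx u c (t / s)"
    and rho: "rel_approx (u / (1 + u)) rho (c/2 + s)"
  shows "\<bar>rho / sqrt (a^2 + b^2) - 1\<bar> \<le> u + 7*u^2 + 100*u^3"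
proof -
  \<comment> \<open>every step is homogeneous, so we may rescale to \<open>a\<^sup>2 + b\<^sup>2 = 1\<close>\<close>
  define S where "S = a^2 + b^2"
  define H where "H = sqrt S"
  have S: "0 < S" using ab by (simp add: S_def sum_power2_gt_zero_iff)
  then have H: "0 < H" "H * H = S" "H \<noteq> 0" "S \<noteq> 0" by (simp_all add: H_def)
  note scale_S = rel_approx_divide_iff[OF \<open>S \<noteq> 0\<close>] and
    scale_H = rel_approx_divide_iff[OF \<open>H \<noteq> 0\<close>]
  have "\<bar>rho / H - 1\<bar> \<le> u + 7*u^2 + 100*u^3"
  proof (rule hypot4_error_normalized[OF u])
    show "0 \<le> a * a / S" "0 \<le> b * b / S" "a * a / S + b * b / S = 1"
      using S ab by (simp_all add: S_def power2_eq_square add_divide_distrib[symmetric])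
    show "rel_approx u (sxh / S) (a * a / S)" "rel_approx u (syh / S) (b * b / S)"
      "rel_approx u (sh / S) (sxh / S + syh / S)" "rel_approx u (t / S) (t1 / S + t2 / S)"
      "rel_approx u (t1 / S) ((a * a / S - sxh / S) + (b * b / S - syh / S))"
      using sxh syh sh t t1 by (simp_all add: scale_S flip: add_divide_distrib diff_divide_distrib)
    show "rel_approx u (t2 / S) ((sh / S - (s / H)^2) + (sxh / S + syh / S - sh / S))"
      using t2 H
      by (simp add: scale_S power_divide power2_eq_square flip: add_divide_distrib diff_divide_distrib)
    have "sqrt (sh / S) = sqrt sh / H" by (simp add: H_def real_sqrt_divide)
    then show "rel_approx u (s / H) (sqrt (sh / S))" using s by (simp add: scale_H)
    have "(t / S) / (s / H) = (t / s) / H" using H(1,3) by (simp flip: H(2))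
    then show "rel_approx u (c / H) ((t / S) / (s / H))" using c by (simp only: scale_H)
    have "(c / H) / 2 + s / H = (c / 2 + s) / H" by (simp add: add_divide_distrib)
    then show "rel_approx (u / (1 + u)) (rho / H) ((c / H) / 2 + s / H)"
      using rho by (simp only: scale_H)
  qed
  then show ?thesis by (simp add: H_def S_def)
qed

definition hypot4_core :: "nat \<Rightarrow> real \<Rightarrow> real \<Rightarrow> real" where
  "hypot4_core p x y =
    (let (sxh, sxl) = Fast2Mult p x x;
         (syh, syl) = Fast2Mult p y y;
         (\<sigma>h, \<sigma>l) = Fast2Sum p sxh syh;
         s = RN p (sqrt \<sigma>h);
         \<delta>s = RN p (\<sigma>h - s^2);
         \<tau>1 = RN p (sxl + syl);
         \<tau>2 = RN p (\<delta>s + \<sigma>l);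
         \<tau> = RN p (\<tau>1 + \<tau>2);
         c = RN p (\<tau> / s)
     in RN p (c / 2 + s))"

lemma hypot4_eq_core: "hypot4 p x y = (if \<bar>x\<bar> < \<bar>y\<bar> then hypot4_core p y x else hypot4_core p x y)"
  by (simp add: hypot4_def hypot4_core_def)

lemma hypot4_core_rel_error:
  assumes p: "4 \<le> p" and u: "u = 1 / 2 ^ p" and ab: "a \<noteq> 0 \<or> b \<noteq> 0"
  shows "\<bar>hypot4_core p a b / sqrt (a^2 + b^2) - 1\<bar> \<le> u + 7*u^2 + 100*u^3"
proof -
  have p2: "2 \<le> p" using p by simp
  have "(16::real) \<le> 2 ^ p" using power_increasing[OF p, of "2::real"] by simp
  then have u0: "0 \<le> u" "u \<le> 1/16" unfolding u by (simp_all add: field_simps)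
  have "u / (1 + u) = 1 / (2 ^ p + 1)" unfolding u by (simp add: field_simps)
  then have RN_last: "rel_approx (u / (1 + u)) (RN p v) v" for v using RN_rel_approx[OF p2] by simp
  have RN_u: "rel_approx u (RN p v) v" for v
    using rel_approx_mono[OF RN_rel_approx[OF p2]] u by (simp add: frac_le)
  define sxh where "sxh = RN p (a * a)"
  define syh where "syh = RN p (b * b)"
  define sh where "sh = RN p (sxh + syh)"
  define s where "s = RN p (sqrt sh)"
  have "0 < a * a + b * b" using ab by (simp add: sum_squares_gt_zero_iff)
  then have "0 < sxh + syh"
    using rel_approx_pos[OF rel_approx_add[OF RN_u RN_u]] u0 unfolding sxh_def syh_def by simp
  then have "0 < sh" using rel_approx_pos[OF RN_u] u0 by (simp add: sh_def)
  \<comment> \<open>the FMA computes \<open>\<sigma>\<^sub>h - s\<^sup>2\<close> exactly\<close>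
  then have \<delta>s: "RN p (sh - s^2) = sh - s^2"
    using RN_of_float[OF p2 RN_sqrt_remainder_is_float[OF p2 is_float_RN[OF p2]]]
    by (simp add: sh_def s_def)
  have "hypot4_core p a b = RN p (RN p (RN p (RN p (a * a - sxh + (b * b - syh)) +
      RN p (sh - s^2 + (sxh + syh - sh))) / s) / 2 + s)"
    unfolding hypot4_core_def Fast2Mult_def Fast2Sum_def Let_def prod.case
    unfolding sxh_def[symmetric] syh_def[symmetric] sh_def[symmetric] s_def[symmetric] \<delta>s ..
  then show ?thesis
    using hypot4_error[OF u0 ab RN_u RN_u RN_u RN_u RN_u RN_u RN_u RN_u RN_last]
    unfolding sxh_def syh_def sh_def s_def by simp
qed

lemma hypot4_rel_error:
  assumes "4 \<le> p" and "u = 1 / 2 ^ p" and "x \<noteq> 0 \<or> y \<noteq> 0"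
  shows "\<bar>hypot4 p x y / sqrt (x^2 + y^2) - 1\<bar> \<le> u + 7*u^2 + 100*u^3"
  using hypot4_core_rel_error[OF assms] hypot4_core_rel_error[of p u y x] assms
  by (auto simp: hypot4_eq_core add.commute)

lemma cubic_error_term_absorbed:
  fixes E u \<kappa> :: real
  assumes "E \<le> u + 7*u^2 + 100*u^3" and "100 * u \<le> \<kappa>"
  shows "E \<le> u + (7 + \<kappa>) * u^2"
proof -
  have "100 * u^3 \<le> \<kappa> * u^2"
    using mult_right_mono[OF assms(2), of "u^2"] by (simp add: power2_eq_square power3_eq_cube algebra_simps)
  then show ?thesis using assms(1) by (simp add: algebra_simps)
qed

theorem theorem4:
  fixes p :: nat and x y u :: real
  assumes "p \<ge> 4" and "u = 1 / 2 ^ p"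
    and "is_float p x" and "is_float p y" and "x \<noteq> 0 \<or> y \<noteq> 0"
  shows "let err = \<bar>hypot4 p x y / sqrt (x^2 + y^2) - 1\<bar> in
           (p \<ge> 4 \<longrightarrow> err \<le> u + (7 + 21.4) * u^2) \<and>
           (p \<ge> 5 \<longrightarrow> err \<le> u + (7 + 6.1) * u^2) \<and>
           (p \<ge> 6 \<longrightarrow> err \<le> u + (7 + 2.5) * u^2) \<and>
           (p \<ge> 7 \<longrightarrow> err \<le> u + (7 + 1.2) * u^2) \<and>
           (p \<ge> 8 \<longrightarrow> err \<le> u + (7 + 0.6) * u^2) \<and>
           (p \<ge> 11 \<longrightarrow> err \<le> u + (7 + 7 * 10 powi -2) * u^2) \<and>
           (p \<ge> 24 \<longrightarrow> err \<le> u + (7 + 8 * 10 powi -6) * u^2) \<and>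
           (p \<ge> 53 \<longrightarrow> err \<le> u + (7 + 2 * 10 powi -14) * u^2) \<and>
           (p \<ge> 113 \<longrightarrow> err \<le> u + (7 + 2 * 10 powi -32) * u^2)"
proof -
  define err where "err = \<bar>hypot4 p x y / sqrt (x^2 + y^2) - 1\<bar>"
  have main: "err \<le> u + 7*u^2 + 100*u^3"
    unfolding err_def using hypot4_rel_error assms(1,2,5) by blast
  have bound: "err \<le> u + (7 + \<kappa>) * u^2" if "N \<le> p" "100 / 2 ^ N \<le> \<kappa>" for N \<kappa>
  proof (rule cubic_error_term_absorbed[OF main])
    have "u \<le> 1 / 2 ^ N" using assms(2) power_increasing[OF that(1), of "2::real"] by (simp add: frac_le)
    then show "100 * u \<le> \<kappa>" using that(2) by simp
  qed
  show ?thesis unfolding Let_def err_def[symmetric]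
    by (intro conjI impI; rule bound, assumption, simp add: power_int_minus)
qed

end
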